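(* Let $g\ge1$ be an integer and let $\mathcal S\subseteq\mathbb N$ be a $\mathcal D[g]$ set. Then, as $n\to\infty$, $$|\mathcal S(n)|\ \le\ \log_2 n+\frac12\log_2\log_2 n+\log_2 g-\log_2\left(\sqrt{\frac2\pi}\right)+o(1),$$ where $\mathcal S(n):=\mathcal S\cap[1,n]$.
   Context: For a positive integer $g$, a set $\mathcal S=\{a_1<a_2<\cdots\}\subset\mathbb N$ is a $\mathcal D[g]$ set if for every $m$ (for which $a_m$ exists) and every $t\in\mathbb Z$, $$\left|\left\{I\subseteq\{1,\dots,m\}:\ \sum_{i\in I}a_i=t\right\}\right|\le g.$$ *)

theory Defs
  imports Complex_Main
begin

text \<open>A set S of naturals is a D[g] set if for every initial segment
  {a_1,...,a_m} of S (in increasing order) and every target t, at most g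
  subsets of that segment sum to t.  Initial segments of S are exactly the
  sets S \<inter> {..N}; index subsets correspond bijectively to element subsets
  since the a_i are distinct.\<close>
definition D_set :: "nat \<Rightarrow> nat set \<Rightarrow> bool" where
  "D_set g S \<longleftrightarrow>
     (\<forall>N t. card {I. I \<subseteq> S \<inter> {..N} \<and> \<Sum>I = t} \<le> g)"

end

theory Submission
  imports Defs "HOL-Analysis.Analysis" "HOL-Real_Asymp.Real_Asymp"
begin

text \<open>Let \<open>A = S \<inter> {1..n}\<close> have \<open>k\<close> elements, and for \<open>I \<subseteq> A\<close> let \<open>\<sigma> I\<close> be the sum of
  \<open>I\<close> minus the sum of \<open>A - I\<close>. The trigonometric polynomial
  \<open>K \<theta> = \<Sum>I\<subseteq>A. \<Sum>j,j'<L. cos ((\<sigma> I + j - j') \<theta>)\<close> factors as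
  \<open>2^k (\<Prod>a\<in>A. cos (a \<theta>)) |\<Sum>j<L. exp (i j \<theta>)|\<^sup>2\<close>. Its integral over \<open>[-pi, pi]\<close> is
  \<open>2 pi\<close> times the number of solutions of \<open>\<sigma> I + j = j'\<close>, which the \<open>D[g]\<close> property bounds
  by \<open>pi g L (L + 1)\<close>. From below, on \<open>|\<theta>| \<le> pi/(2n)\<close> the product of cosines is at least
  \<open>cos (n \<theta>) ^ k\<close>, whose integral is a Wallis integral of size \<open>sqrt (2 pi / (k + 1)) / n\<close>,
  and on the rest of the circle \<open>K \<theta> \<ge> -16 * 2^k / \<theta>\<^sup>2\<close>. Taking \<open>L\<close> about
  \<open>e n sqrt (k + 1) / 3\<close> gives \<open>2^k \<le> g n sqrt (k + 1) sqrt (pi/2) (1 + e) / (1 - 2 e)\<close>;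
  taking logarithms and resolving the implicit bound for \<open>k\<close> yields the theorem.\<close>

lemma cos_ge_one_minus_sq_div2: "1 - x\<^sup>2 / 2 \<le> cos (x::real)"
proof -
  have "cos x = 1 - 2 * sin (x/2)^2" using cos_double_sin[of "x/2"] by simp
  moreover have "sin (x/2)^2 \<le> (x/2)^2"
    using abs_sin_x_le_abs_x[of "x/2"] by (metis abs_ge_zero power2_abs power_mono)
  ultimately show ?thesis by (simp add: power_divide)
qed

lemma sin_ge_minus_cube_div6:
  assumes "0 \<le> (x::real)"
  shows "x - x^3 / 6 \<le> sin x"
proof -
  let ?f = "\<lambda>t::real. sin t - t + t^3/6"
  have "?f 0 \<le> ?f x"
  proof (rule DERIV_nonneg_imp_increasing_open[OF assms])
    fix t :: real
    have "DERIV ?f t :> cos t - 1 + 3 * t^2 / 6"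
      by (auto intro!: derivative_eq_intros)
    moreover have "cos t - 1 + 3 * t^2 / 6 \<ge> 0" using cos_ge_one_minus_sq_div2[of t] by simp
    ultimately show "\<exists>y. DERIV ?f t :> y \<and> y \<ge> 0" by blast
  next
    show "continuous_on {0..x} ?f" by (intro continuous_intros) auto
  qed
  then show ?thesis by simp
qed

lemma sq_le_four_sin_sq:
  assumes "\<bar>u::real\<bar> \<le> pi/2"
  shows "u\<^sup>2 \<le> 4 * (sin u)\<^sup>2"
proof -
  have half_le_sin: "v \<le> 2 * sin v" if "0 \<le> v" "v \<le> pi/2" for v :: real
  proof -
    have "v^2 \<le> (pi/2)^2" using that by (intro power_mono) auto
    also have "\<dots> \<le> 3"
    proof -
      have "pi * pi \<le> 3.2 * 3.2" using pi_approx pi_ge_zero by (intro mult_mono) auto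
      then show ?thesis by (simp add: power2_eq_square)
    qed
    finally have "v * v^2 \<le> v * 3" using that by (intro mult_left_mono) auto
    then have "v/2 \<le> v - v^3/6" by (simp add: power3_eq_cube power2_eq_square algebra_simps)
    then show ?thesis using sin_ge_minus_cube_div6[OF that(1)] by simp
  qed
  have "sin \<bar>u\<bar> = \<bar>sin u\<bar>"
    using sin_ge_zero[of u] sin_ge_zero[of "-u"] assms by (cases "u \<ge> 0") auto
  then have "\<bar>u\<bar> \<le> 2 * \<bar>sin u\<bar>" using half_le_sin[of "\<bar>u\<bar>"] assms by simp
  then have "\<bar>u\<bar>^2 \<le> (2 * \<bar>sin u\<bar>)^2" by (intro power_mono) auto
  then show ?thesis by (simp add: power_mult_distrib)
qed

lemma has_integral_of_real_derivative:
  fixes f f' :: "real \<Rightarrow> real"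
  assumes "a \<le> b" "\<And>x. x \<in> {a..b} \<Longrightarrow> (f has_real_derivative f' x) (at x)"
  shows "(f' has_integral (f b - f a)) {a..b}"
  using assms(1)
proof (rule fundamental_theorem_of_calculus)
  fix x assume "x \<in> {a..b}"
  then show "(f has_vector_derivative f' x) (at x within {a..b})"
    using assms(2) has_real_derivative_iff_has_vector_derivative
    by (metis has_field_derivative_at_within)
qed

lemma integral_inverse_sq_le:
  fixes a b :: real
  assumes "0 < a" "a \<le> b"
  shows "integral {a..b} (\<lambda>t. 1 / t\<^sup>2) \<le> 1 / a"
proof -
  have "((\<lambda>t. 1 / t^2) has_integral ((- 1 / b) - (- 1 / a))) {a..b}"
  proof (rule has_integral_of_real_derivative[OF assms(2)])
    fix x assume "x \<in> {a..b}"
    then have "x \<noteq> 0" using assms by auto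
    then show "((\<lambda>t. - 1 / t) has_real_derivative 1 / x^2) (at x)"
      by (auto intro!: derivative_eq_intros simp: power2_eq_square)
  qed
  then show ?thesis using assms by (simp add: integral_unique)
qed

lemma integral_ge_neg_inverse_sq:
  fixes f :: "real \<Rightarrow> real" and a b C :: real
  assumes "0 < a" "a \<le> b" "0 \<le> C" "f integrable_on {a..b}"
    and "\<And>t. t \<in> {a..b} \<Longrightarrow> - C / t\<^sup>2 \<le> f t"
  shows "- C / a \<le> integral {a..b} f"
proof -
  have "integral {a..b} (\<lambda>t. - C * (1 / t^2)) \<le> integral {a..b} f"
  proof (rule integral_le)
    show "(\<lambda>t. - C * (1 / t^2)) integrable_on {a..b}"
      by (rule integrable_continuous_interval) (use assms(1) in \<open>intro continuous_intros; auto\<close>)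
  qed (use assms in auto)
  moreover have "integral {a..b} (\<lambda>t. - C * (1 / t^2)) = - C * integral {a..b} (\<lambda>t. 1 / t^2)"
    by (rule integral_mult_right)
  moreover have "C * integral {a..b} (\<lambda>t. 1 / t^2) \<le> C * (1 / a)"
    using integral_inverse_sq_le[OF assms(1,2)] assms(3) by (intro mult_left_mono)
  ultimately show ?thesis by simp
qed

section \<open>Rescaled Wallis integrals\<close>

text \<open>The classical Wallis integral of \<open>cos ^ k\<close> over \<open>[-pi/2, pi/2]\<close>, divided by \<open>M\<close>.\<close>
definition wallis_integral :: "nat \<Rightarrow> real \<Rightarrow> real" where
  "wallis_integral k M = integral {-(pi/(2*M))..pi/(2*M)} (\<lambda>t. cos (M*t)^k)"

lemma abs_mult_le_pi_half:
  assumes "0 < M" "\<bar>t\<bar> \<le> pi/(2*M)"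
  shows "\<bar>M*t\<bar> \<le> pi/2"
proof -
  have "\<bar>M*t\<bar> = M * \<bar>t\<bar>" using assms by (simp add: abs_mult)
  also have "\<dots> \<le> M * (pi/(2*M))" using assms by (intro mult_left_mono) auto
  finally show ?thesis using assms by simp
qed

lemma cos_mult_nonneg:
  assumes "0 < M" "\<bar>t\<bar> \<le> pi/(2*M)"
  shows "0 \<le> cos (M*t)"
  using abs_mult_le_pi_half[OF assms] by (intro cos_ge_zero) auto

lemma wallis_integral_recurrence:
  assumes "0 < M"
  shows "(real k + 2) * wallis_integral (k+2) M = (real k + 1) * wallis_integral k M"
proof -
  let ?c = "pi/(2*M)"
  let ?F = "\<lambda>t. sin (M*t) * cos (M*t)^(k+1)"
  let ?f = "\<lambda>t. M * ((real k + 2) * cos (M*t)^(k+2) - (real k + 1) * cos (M*t)^k)"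
  have deriv: "(?F has_real_derivative ?f t) (at t)" for t
  proof -
    have "((\<lambda>t. cos (M*t)) has_real_derivative - sin (M*t) * M) (at t)"
      by (auto intro!: derivative_eq_intros)
    from DERIV_power_Suc[OF this, of k]
    have cos_pow: "((\<lambda>t. cos (M*t)^(k+1)) has_real_derivative
        real (k+1) * cos (M*t)^k * (- sin (M*t) * M)) (at t)"
      by (simp add: algebra_simps)
    have sin: "((\<lambda>t. sin (M*t)) has_real_derivative cos (M*t) * M) (at t)"
      by (auto intro!: derivative_eq_intros)
    have "(?F has_real_derivative M * cos (M*t) * cos (M*t)^(k+1)
        + sin (M*t) * (real (k+1) * cos (M*t)^k * (- sin (M*t) * M))) (at t)"
      using DERIV_mult[OF sin cos_pow] by (simp add: algebra_simps)
    moreover have "M * cos (M*t) * cos (M*t)^(k+1)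
        + sin (M*t) * (real (k+1) * cos (M*t)^k * (- sin (M*t) * M)) = ?f t"
    proof -
      have sin_sq: "sin (M*t)^2 = 1 - cos (M*t)^2" by (simp add: sin_squared_eq)
      have "M * cos (M*t) * cos (M*t)^(k+1)
          + sin (M*t) * (real (k+1) * cos (M*t)^k * (- sin (M*t) * M))
          = M * (cos (M*t)^(k+2) - real (k+1) * cos (M*t)^k * sin (M*t)^2)"
        by (simp add: power2_eq_square algebra_simps)
      also have "\<dots> = ?f t" unfolding sin_sq by (simp add: power_add power2_eq_square algebra_simps)
      finally show ?thesis .
    qed
    ultimately show ?thesis by simp
  qed
  have "(?f has_integral (?F ?c - ?F (-?c))) {-?c..?c}"
    using assms by (intro has_integral_of_real_derivative[of "-?c" ?c ?F ?f] deriv) auto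
  note integral_unique[OF this]
  moreover have "?F ?c - ?F (-?c) = 0" using assms by auto
  ultimately have "integral {-?c..?c} ?f = 0" by simp
  moreover have "integral {-?c..?c} ?f
      = M * ((real k + 2) * wallis_integral (k+2) M - (real k + 1) * wallis_integral k M)"
  proof -
    have "(\<lambda>t. (real k + 2) * cos (M*t)^(k+2)) integrable_on {-?c..?c}"
      and "(\<lambda>t. (real k + 1) * cos (M*t)^k) integrable_on {-?c..?c}"
      by (intro integrable_continuous_interval continuous_intros)+
    then show ?thesis by (simp only: wallis_integral_def integral_mult_right integral_diff)
  qed
  ultimately show ?thesis using assms by simp
qed

lemma wallis_integral_0: "0 < M \<Longrightarrow> wallis_integral 0 M = pi / M"
  by (simp add: wallis_integral_def)

lemma wallis_integral_1:
  assumes "0 < M"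
  shows "wallis_integral (Suc 0) M = 2 / M"
proof -
  let ?c = "pi/(2*M)"
  have "((\<lambda>t. cos (M*t)) has_integral (sin (M*?c)/M - sin (M*(-?c))/M)) {-?c..?c}"
  proof (rule has_integral_of_real_derivative)
    show "-?c \<le> ?c" using assms by simp
    fix x show "((\<lambda>t. sin (M*t)/M) has_real_derivative cos (M*x)) (at x)"
      using assms by (auto intro!: derivative_eq_intros)
  qed
  then show ?thesis using assms unfolding wallis_integral_def by (simp add: integral_unique)
qed

lemma wallis_integral_nonneg:
  assumes "0 < M"
  shows "0 \<le> wallis_integral k M"
  unfolding wallis_integral_def
proof (rule integral_nonneg)
  fix t assume "t \<in> {-(pi/(2*M))..pi/(2*M)}"
  then show "0 \<le> cos (M*t)^k" using assms by (intro zero_le_power cos_mult_nonneg) auto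
qed (auto intro!: integrable_continuous_interval continuous_intros)

lemma wallis_integral_Suc_le:
  assumes "0 < M"
  shows "wallis_integral (Suc k) M \<le> wallis_integral k M"
  unfolding wallis_integral_def
proof (rule integral_le)
  fix t assume "t \<in> {-(pi/(2*M))..pi/(2*M)}"
  then have "0 \<le> cos (M*t)" using assms by (intro cos_mult_nonneg) auto
  then show "cos (M*t)^Suc k \<le> cos (M*t)^k" by (simp add: mult_left_le_one_le)
qed (auto intro!: integrable_continuous_interval continuous_intros)

lemma wallis_integral_product:
  assumes "0 < M"
  shows "(real k + 1) * wallis_integral k M * wallis_integral (Suc k) M = 2 * pi / M\<^sup>2"
proof (induction k)
  case 0
  then show ?case using assms by (simp add: wallis_integral_0 wallis_integral_1 power2_eq_square)
next
  case (Suc k)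
  have "(real (Suc k) + 1) * wallis_integral (Suc k) M * wallis_integral (Suc (Suc k)) M
      = wallis_integral (Suc k) M * ((real k + 2) * wallis_integral (k+2) M)"
    by (simp add: algebra_simps)
  also have "\<dots> = wallis_integral (Suc k) M * ((real k + 1) * wallis_integral k M)"
    using wallis_integral_recurrence[OF assms, of k] by simp
  finally show ?case using Suc by (simp add: algebra_simps)
qed

lemma wallis_integral_lower_bound:
  assumes "0 < M"
  shows "sqrt (2*pi / (real k + 1)) / M \<le> wallis_integral k M"
proof -
  let ?W = "wallis_integral k M"
  have "2*pi / M\<^sup>2 / (real k + 1) = ?W * wallis_integral (Suc k) M"
    using wallis_integral_product[OF assms, of k]
    by (metis (no_types, lifting) mult.assoc nonzero_mult_div_cancel_left of_nat_Suc of_nat_neq_0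
        add.commute)
  then have "(2*pi / (real k + 1)) / M\<^sup>2 = ?W * wallis_integral (Suc k) M" by (simp add: mult.commute)
  also have "\<dots> \<le> ?W\<^sup>2"
    using wallis_integral_Suc_le[OF assms] wallis_integral_nonneg[OF assms]
    by (simp add: power2_eq_square mult_left_mono)
  finally have "sqrt ((2*pi / (real k + 1)) / M\<^sup>2) \<le> ?W"
    using wallis_integral_nonneg[OF assms] real_le_lsqrt by (metis real_sqrt_le_iff real_sqrt_unique)
  moreover have "sqrt ((2*pi / (real k + 1)) / M\<^sup>2) = sqrt (2*pi / (real k + 1)) / M"
    using assms by (subst real_sqrt_divide) simp
  ultimately show ?thesis by simp
qed

lemma integral_sq_mult_cos_power_le:
  assumes "0 < M"
  shows "integral {-(pi/(2*M))..pi/(2*M)} (\<lambda>t. t\<^sup>2 * cos (M*t)^k)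
           \<le> 4 / M\<^sup>2 * (wallis_integral k M / (real k + 2))"
proof -
  let ?c = "pi/(2*M)"
  have "integral {-?c..?c} (\<lambda>t. t^2 * cos (M*t)^k)
      \<le> integral {-?c..?c} (\<lambda>t. 4 / M^2 * (cos (M*t)^k - cos (M*t)^(k+2)))"
  proof (rule integral_le)
    fix t assume "t \<in> {-?c..?c}"
    then have t: "\<bar>t\<bar> \<le> ?c" by auto
    have "(M*t)^2 \<le> 4 * sin (M*t)^2" by (rule sq_le_four_sin_sq[OF abs_mult_le_pi_half[OF assms t]])
    then have "t^2 \<le> 4 / M^2 * sin (M*t)^2" using assms by (simp add: field_simps power_mult_distrib)
    then have "t^2 * cos (M*t)^k \<le> 4 / M^2 * sin (M*t)^2 * cos (M*t)^k"
      using cos_mult_nonneg[OF assms t] by (intro mult_right_mono) auto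
    also have "\<dots> = 4 / M^2 * ((1 - cos (M*t)^2) * cos (M*t)^k)"
      by (simp add: sin_squared_eq)
    also have "\<dots> = 4 / M^2 * (cos (M*t)^k - cos (M*t)^(k+2))"
      by (simp add: power_add power2_eq_square algebra_simps)
    finally show "t^2 * cos (M*t)^k \<le> 4 / M^2 * (cos (M*t)^k - cos (M*t)^(k+2))" .
  qed (use assms in \<open>auto intro!: integrable_continuous_interval continuous_intros\<close>)
  also have "\<dots> = 4 / M^2 * (wallis_integral k M - wallis_integral (k+2) M)"
    unfolding wallis_integral_def
    by (simp only: integral_mult_right integral_diff integrable_continuous_interval continuous_intros)
  also have "wallis_integral k M - wallis_integral (k+2) M = wallis_integral k M / (real k + 2)"
    using wallis_integral_recurrence[OF assms, of k] by (simp add: field_simps)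
  finally show ?thesis .
qed

section \<open>The subset-sum kernel\<close>

definition signed_subset_sum :: "nat set \<Rightarrow> nat set \<Rightarrow> int" where
  "signed_subset_sum A I = 2 * int (\<Sum>I) - int (\<Sum>A)"

lemma sum_Pow_insert:
  assumes "finite A" "x \<notin> A"
  shows "(\<Sum>I\<in>Pow (insert x A). f I) = (\<Sum>I\<in>Pow A. f I + f (insert x I))"
proof -
  have "(\<Sum>I\<in>Pow (insert x A). f I) = (\<Sum>I\<in>Pow A. f I) + (\<Sum>I\<in>insert x ` Pow A. f I)"
    unfolding Pow_insert by (rule sum.union_disjoint) (use assms in auto)
  also have "(\<Sum>I\<in>insert x ` Pow A. f I) = (\<Sum>I\<in>Pow A. f (insert x I))"
  proof (rule sum.reindex_cong[of "insert x"])
    show "inj_on (insert x) (Pow A)"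
      using assms unfolding inj_on_def by (metis Pow_iff insert_ident subset_iff)
  qed auto
  finally show ?thesis by (simp add: sum.distrib)
qed

lemma signed_subset_sum_insert:
  assumes "finite A" "x \<notin> A" "I \<subseteq> A"
  shows "signed_subset_sum (insert x A) I = signed_subset_sum A I - int x"
    and "signed_subset_sum (insert x A) (insert x I) = signed_subset_sum A I + int x"
proof -
  have "finite I" "x \<notin> I" using assms finite_subset by auto
  then show "signed_subset_sum (insert x A) I = signed_subset_sum A I - int x"
    and "signed_subset_sum (insert x A) (insert x I) = signed_subset_sum A I + int x"
    using assms by (simp_all add: signed_subset_sum_def)
qed

text \<open>Real and imaginary part of the expansion of the product over \<open>a \<in> A\<close> of
  \<open>exp (i a \<theta>) + exp (-i a \<theta>)\<close> as a sum over the subsets of \<open>A\<close>.\<close>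
lemma sum_Pow_cos_sin_signed_subset_sum:
  fixes \<theta> :: real
  assumes "finite A"
  shows "(\<Sum>I\<in>Pow A. cos (of_int (signed_subset_sum A I) * \<theta>)) = 2 ^ card A * (\<Prod>a\<in>A. cos (real a * \<theta>))"
    and "(\<Sum>I\<in>Pow A. sin (of_int (signed_subset_sum A I) * \<theta>)) = 0"
  using assms
proof (induction A rule: finite_induct)
  case empty
  { case 1 show ?case by (simp add: signed_subset_sum_def) }
  { case 2 show ?case by (simp add: signed_subset_sum_def) }
next
  case (insert x A)
  let ?y = "\<lambda>I. of_int (signed_subset_sum A I) * \<theta>" and ?x = "real x * \<theta>"
  have shift: "(\<Sum>I\<in>Pow (insert x A). f (of_int (signed_subset_sum (insert x A) I) * \<theta>))
      = (\<Sum>I\<in>Pow A. f (?y I - ?x) + f (?y I + ?x))" for f :: "real \<Rightarrow> real"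
    unfolding sum_Pow_insert[OF insert.hyps]
    by (intro sum.cong) (use insert.hyps in \<open>auto simp: signed_subset_sum_insert algebra_simps\<close>)
  { case 1
    have "(\<Sum>I\<in>Pow A. cos (?y I - ?x) + cos (?y I + ?x)) = 2 * cos ?x * (\<Sum>I\<in>Pow A. cos (?y I))"
      by (simp add: cos_add cos_diff sum_distrib_left mult_ac)
    then show ?case using insert shift[of cos] by simp }
  { case 2
    have "(\<Sum>I\<in>Pow A. sin (?y I - ?x) + sin (?y I + ?x)) = 2 * cos ?x * (\<Sum>I\<in>Pow A. sin (?y I))"
      by (simp add: sin_add sin_diff sum_distrib_left mult_ac)
    then show ?case using insert shift[of sin] by simp }
qed

text \<open>This is \<open>|\<Sum>j<L. exp (i j \<theta>)|\<^sup>2\<close>, i.e. \<open>L\<close> times the Fejer kernel.\<close>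
definition fejer_sum :: "nat \<Rightarrow> real \<Rightarrow> real" where
  "fejer_sum L \<theta> = (\<Sum>j<L. \<Sum>j'<L. cos ((real j - real j') * \<theta>))"

lemma fejer_sum_eq_sq:
  "fejer_sum L \<theta> = (\<Sum>j<L. cos (real j * \<theta>))\<^sup>2 + (\<Sum>j<L. sin (real j * \<theta>))\<^sup>2"
  unfolding fejer_sum_def power2_eq_square sum_product
  by (simp add: left_diff_distrib cos_diff sum.distrib[symmetric])

lemma fejer_sum_nonneg: "0 \<le> fejer_sum L \<theta>"
  unfolding fejer_sum_eq_sq by simp

lemma fejer_sum_lower_bound: "real L ^ 2 - real L ^ 4 * \<theta>\<^sup>2 / 2 \<le> fejer_sum L \<theta>"
proof -
  have "(\<Sum>j<L. \<Sum>j'<L. 1 - real L^2 * \<theta>^2 / 2) \<le> fejer_sum L \<theta>"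
    unfolding fejer_sum_def
  proof (intro sum_mono)
    fix j j' assume "j \<in> {..<L}" "j' \<in> {..<L}"
    then have "\<bar>real j - real j'\<bar> \<le> real L" by auto
    then have "(real j - real j')^2 \<le> real L ^2" by (metis abs_ge_zero power2_abs power_mono)
    then have "((real j - real j') * \<theta>)^2 \<le> real L^2 * \<theta>^2"
      by (simp add: power_mult_distrib mult_right_mono)
    then show "1 - real L^2 * \<theta>^2 / 2 \<le> cos ((real j - real j') * \<theta>)"
      using cos_ge_one_minus_sq_div2[of "(real j - real j') * \<theta>"] by simp
  qed
  then show ?thesis by (simp add: power2_eq_square algebra_simps power4_eq_xxxx)
qed

lemma sin_half_mult_sum_cos:
  "2 * sin (\<theta>/2) * (\<Sum>j<L. cos (real j * \<theta>)) = sin (real L * \<theta> - \<theta>/2) + sin (\<theta>/2)"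
proof (induction L)
  case (Suc L)
  have "2 * sin (\<theta>/2) * cos (real L * \<theta>) = sin (real L * \<theta> + \<theta>/2) - sin (real L * \<theta> - \<theta>/2)"
    by (simp add: sin_add sin_diff)
  then show ?case using Suc by (simp add: algebra_simps)
qed (simp add: sin_minus)

lemma sin_half_mult_sum_sin:
  "2 * sin (\<theta>/2) * (\<Sum>j<L. sin (real j * \<theta>)) = cos (\<theta>/2) - cos (real L * \<theta> - \<theta>/2)"
proof (induction L)
  case (Suc L)
  have "2 * sin (\<theta>/2) * sin (real L * \<theta>) = cos (real L * \<theta> - \<theta>/2) - cos (real L * \<theta> + \<theta>/2)"
    by (simp add: cos_add cos_diff)
  then show ?case using Suc by (simp add: algebra_simps)
qed (simp add: cos_minus)

lemma fejer_sum_mult_sin_sq_le: "fejer_sum L \<theta> * (sin (\<theta>/2))\<^sup>2 \<le> 1"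
proof -
  let ?A = "real L * \<theta> - \<theta>/2" and ?B = "\<theta>/2"
  have "4 * (fejer_sum L \<theta> * sin (\<theta>/2)^2)
      = (2 * sin (\<theta>/2) * (\<Sum>j<L. cos (real j * \<theta>)))^2 + (2 * sin (\<theta>/2) * (\<Sum>j<L. sin (real j * \<theta>)))^2"
    unfolding fejer_sum_eq_sq by (simp add: power_mult_distrib algebra_simps)
  also have "\<dots> = (sin ?A + sin ?B)^2 + (cos ?B - cos ?A)^2"
    unfolding sin_half_mult_sum_cos sin_half_mult_sum_sin ..
  also have "\<dots> = 2 + 2 * (sin ?A * sin ?B - cos ?A * cos ?B)"
    using sin_cos_squared_add[of ?A] sin_cos_squared_add[of ?B]
    by (simp add: power2_eq_square algebra_simps)
  also have "sin ?A * sin ?B - cos ?A * cos ?B = - cos (?A + ?B)" using cos_add[of ?A ?B] by linarith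
  also have "2 + 2 * (- cos (?A + ?B)) \<le> 4" using cos_ge_minus_one[of "?A + ?B"] by linarith
  finally show ?thesis by simp
qed

lemma fejer_sum_le_inverse_sq:
  assumes "t \<noteq> 0" "\<bar>t\<bar> \<le> pi"
  shows "fejer_sum L t \<le> 16 / t\<^sup>2"
proof -
  have "(t/2)^2 \<le> 4 * sin (t/2)^2" using assms by (intro sq_le_four_sin_sq) auto
  then have s: "t^2 / 16 \<le> sin (t/2)^2" by (simp add: power_divide)
  have tp: "t^2 > 0" using assms by simp
  then have sp: "sin (t/2)^2 > 0" using s by linarith
  have "fejer_sum L t \<le> 1 / sin (t/2)^2"
    using fejer_sum_mult_sin_sq_le[of L t] sp by (simp add: field_simps)
  also have "\<dots> \<le> 1 / (t^2/16)"
    by (rule divide_left_mono) (use s tp sp in \<open>auto intro: mult_pos_pos\<close>)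
  finally show ?thesis by simp
qed

definition cos_product :: "nat set \<Rightarrow> real \<Rightarrow> real" where
  "cos_product A \<theta> = (\<Prod>a\<in>A. cos (real a * \<theta>))"

lemma abs_cos_product_le_1: "\<bar>cos_product A \<theta>\<bar> \<le> 1"
proof -
  have "\<bar>cos_product A \<theta>\<bar> = (\<Prod>a\<in>A. \<bar>cos (real a * \<theta>)\<bar>)"
    unfolding cos_product_def by (simp add: abs_prod)
  also have "\<dots> \<le> (\<Prod>a\<in>A. 1)" by (intro prod_mono) auto
  finally show ?thesis by simp
qed

lemma cos_product_lower_bound:
  assumes "0 < M" "\<forall>a\<in>A. real a \<le> M" "\<bar>\<theta>\<bar> \<le> pi/(2*M)"
  shows "cos (M*\<theta>) ^ card A \<le> cos_product A \<theta>"
proof -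
  have Mt: "\<bar>M*\<theta>\<bar> \<le> pi/2" by (rule abs_mult_le_pi_half[OF assms(1,3)])
  have "(\<Prod>a\<in>A. cos (M*\<theta>)) \<le> cos_product A \<theta>"
    unfolding cos_product_def
  proof (rule prod_mono)
    fix a assume "a \<in> A"
    then have "real a \<le> M" using assms(2) by blast
    then have "\<bar>real a * \<theta>\<bar> \<le> \<bar>M * \<theta>\<bar>" using assms(1) by (simp add: abs_mult mult_right_mono)
    then have "cos \<bar>M*\<theta>\<bar> \<le> cos \<bar>real a * \<theta>\<bar>" using Mt by (intro cos_monotone_0_pi_le) auto
    then show "0 \<le> cos (M*\<theta>) \<and> cos (M*\<theta>) \<le> cos (real a * \<theta>)"
      using cos_mult_nonneg[OF assms(1,3)] by simp
  qed
  then show ?thesis by simp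
qed

text \<open>With \<open>\<sigma> = signed_subset_sum A\<close>, the integral of the kernel over \<open>[-pi, pi]\<close> counts
  the solutions of \<open>\<sigma> I + j = j'\<close> (\<open>subset_sum_coincidences\<close>), while the kernel factors as
  \<open>2 ^ card A * cos_product A \<theta> * fejer_sum L \<theta>\<close>.\<close>
definition subset_sum_kernel :: "nat set \<Rightarrow> nat \<Rightarrow> real \<Rightarrow> real" where
  "subset_sum_kernel A L \<theta> =
     (\<Sum>I\<in>Pow A. \<Sum>j<L. \<Sum>j'<L. cos (of_int (signed_subset_sum A I + int j - int j') * \<theta>))"

definition subset_sum_coincidences :: "nat set \<Rightarrow> nat \<Rightarrow> real" where
  "subset_sum_coincidences A L =
     (\<Sum>I\<in>Pow A. \<Sum>j<L. \<Sum>j'<L. if signed_subset_sum A I + int j - int j' = 0 then 1 else 0)"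

lemma subset_sum_kernel_eq:
  assumes "finite A"
  shows "subset_sum_kernel A L \<theta> = 2 ^ card A * cos_product A \<theta> * fejer_sum L \<theta>"
proof -
  let ?X = "\<lambda>I. of_int (signed_subset_sum A I) * \<theta>" and ?d = "\<lambda>j j'. (real j - real j') * \<theta>"
  have "subset_sum_kernel A L \<theta>
      = (\<Sum>I\<in>Pow A. \<Sum>j<L. \<Sum>j'<L. cos (?X I) * cos (?d j j') - sin (?X I) * sin (?d j j'))"
    unfolding subset_sum_kernel_def by (intro sum.cong refl) (simp add: cos_add[symmetric] algebra_simps)
  also have "\<dots> = (\<Sum>I\<in>Pow A. cos (?X I) * fejer_sum L \<theta>)
                  - (\<Sum>I\<in>Pow A. sin (?X I) * (\<Sum>j<L. \<Sum>j'<L. sin (?d j j')))"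
    unfolding fejer_sum_def by (simp add: sum_subtractf sum_distrib_left)
  also have "\<dots> = (\<Sum>I\<in>Pow A. cos (?X I)) * fejer_sum L \<theta>
                  - (\<Sum>I\<in>Pow A. sin (?X I)) * (\<Sum>j<L. \<Sum>j'<L. sin (?d j j'))"
    by (simp add: sum_distrib_right)
  also have "\<dots> = 2 ^ card A * cos_product A \<theta> * fejer_sum L \<theta>"
    using sum_Pow_cos_sin_signed_subset_sum[OF assms, of \<theta>] unfolding cos_product_def by simp
  finally show ?thesis .
qed

lemma has_integral_subset_sum_kernel:
  assumes "finite A"
  shows "(subset_sum_kernel A L has_integral (2 * pi * subset_sum_coincidences A L)) {-pi..pi}"
proof -
  have "(subset_sum_kernel A L has_integral (\<Sum>I\<in>Pow A. \<Sum>j<L. \<Sum>j'<L.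
      if signed_subset_sum A I + int j - int j' = 0 then 2 * pi else 0)) {-pi..pi}"
    unfolding subset_sum_kernel_def
    by (intro has_integral_sum has_integral_cos_nx) (use assms in auto)
  moreover have "(\<Sum>I\<in>Pow A. \<Sum>j<L. \<Sum>j'<L. if signed_subset_sum A I + int j - int j' = 0 then 2 * pi else 0)
      = 2 * pi * subset_sum_coincidences A L"
    unfolding subset_sum_coincidences_def by (simp add: sum_distrib_left if_distrib cong: if_cong)
  ultimately show ?thesis by simp
qed

lemma sum_lessThan_indicator_eq:
  "(\<Sum>j<L. if (v::int) - int j = 0 then 1 else 0::real) = (if 0 \<le> v \<and> v < int L then 1 else 0)"
  by (induction L) auto

lemma card_even_window_le:
  fixes lo :: int
  shows "2 * card {s::nat. lo \<le> 2 * int s \<and> 2 * int s < lo + int L} \<le> L + 1"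
proof -
  let ?R = "{s::nat. lo \<le> 2 * int s \<and> 2 * int s < lo + int L}"
  let ?B = "{(lo+1) div 2 .. (lo + int L - 1) div 2}"
  have "int ` ?R \<subseteq> ?B"
  proof
    fix x assume "x \<in> int ` ?R"
    then obtain s where s: "x = int s" "lo \<le> 2 * int s" "2 * int s < lo + int L" by auto
    then have "(lo+1) div 2 \<le> int s" "int s \<le> (lo + int L - 1) div 2" by presburger+
    then show "x \<in> ?B" using s by auto
  qed
  then have "card (int ` ?R) \<le> card ?B" by (intro card_mono) auto
  then have "card ?R \<le> nat ((lo + int L - 1) div 2 - (lo+1) div 2 + 1)" by (simp add: card_image)
  moreover have "2 * ((lo + int L - 1) div 2 - (lo+1) div 2 + 1) \<le> int L + 1" by presburger
  ultimately show ?thesis by linarith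
qed

text \<open>For fixed \<open>j\<close>, the condition \<open>\<sigma> I + j = j'\<close> with \<open>j' < L\<close> confines \<open>\<Sum>I\<close> to a window
  containing at most \<open>(L + 1) / 2\<close> integers, each the sum of at most \<open>g\<close> subsets.\<close>
lemma subset_sum_coincidences_le:
  assumes "finite A" and g: "\<And>s. card {I \<in> Pow A. \<Sum>I = s} \<le> g"
  shows "subset_sum_coincidences A L \<le> real g * real L * (real L + 1) / 2"
proof -
  let ?R = "\<lambda>j. {s::nat. int (\<Sum>A) - int j \<le> 2 * int s \<and> 2 * int s < int (\<Sum>A) - int j + int L}"
  have window: "(\<Sum>j'<L. if signed_subset_sum A I + int j - int j' = 0 then 1 else 0::real)
      = (if \<Sum>I \<in> ?R j then 1 else 0)" for I j
    unfolding sum_lessThan_indicator_eq by (auto simp: signed_subset_sum_def)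
  have count: "(\<Sum>I\<in>Pow A. if \<Sum>I \<in> ?R j then 1 else 0::real) \<le> real g * (real L + 1) / 2" for j
  proof -
    have "finite (?R j)" by (rule finite_subset[of _ "{..nat (int (\<Sum>A) + int L)}"]) auto
    have "{I \<in> Pow A. \<Sum>I \<in> ?R j} = (\<Union>s\<in>?R j. {I \<in> Pow A. \<Sum>I = s})" by blast
    then have "card {I \<in> Pow A. \<Sum>I \<in> ?R j} \<le> (\<Sum>s\<in>?R j. card {I \<in> Pow A. \<Sum>I = s})"
      by (simp only: card_UN_le[OF \<open>finite (?R j)\<close>])
    also have "\<dots> \<le> (\<Sum>s\<in>?R j. g)" by (rule sum_mono) (rule g)
    also have "\<dots> = g * card (?R j)" by simp
    finally have "real (card {I \<in> Pow A. \<Sum>I \<in> ?R j}) \<le> real (g * card (?R j))"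
      by (simp only: of_nat_le_iff)
    then have "real (card {I \<in> Pow A. \<Sum>I \<in> ?R j}) \<le> real g * real (card (?R j))"
      by simp
    also have "\<dots> \<le> real g * ((real L + 1) / 2)"
      using card_even_window_le[of "int (\<Sum>A) - int j" L] by (intro mult_left_mono) auto
    finally show ?thesis using assms(1) by (simp add: sum.inter_filter[symmetric])
  qed
  have "subset_sum_coincidences A L
      = (\<Sum>j<L. \<Sum>I\<in>Pow A. \<Sum>j'<L. if signed_subset_sum A I + int j - int j' = 0 then 1 else 0::real)"
    unfolding subset_sum_coincidences_def by (rule sum.swap)
  also have "\<dots> \<le> (\<Sum>j<L. real g * (real L + 1) / 2)"
    unfolding window by (intro sum_mono count)
  also have "\<dots> = real g * real L * (real L + 1) / 2" by simp
  finally show ?thesis .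
qed

section \<open>The integral inequality\<close>

lemma continuous_on_subset_sum_kernel: "continuous_on S (subset_sum_kernel A L)"
  unfolding subset_sum_kernel_def by (intro continuous_intros)

lemma subset_sum_kernel_integrable: "subset_sum_kernel A L integrable_on {a..b}"
  by (rule integrable_continuous_interval[OF continuous_on_subset_sum_kernel])

lemma subset_sum_kernel_central_lower_bound:
  assumes "finite A" "0 < M" "\<forall>a\<in>A. real a \<le> M" "\<bar>t\<bar> \<le> pi/(2*M)"
  shows "2 ^ card A * (cos (M*t) ^ card A * (real L ^ 2 - real L ^ 4 * t\<^sup>2 / 2)) \<le> subset_sum_kernel A L t"
proof -
  have "0 \<le> cos (M*t) ^ card A" using cos_mult_nonneg[OF assms(2,4)] by simp
  then have "cos (M*t) ^ card A * (real L ^ 2 - real L ^ 4 * t^2 / 2) \<le> cos (M*t) ^ card A * fejer_sum L t"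
    using fejer_sum_lower_bound[of L t] by (intro mult_left_mono)
  also have "\<dots> \<le> cos_product A t * fejer_sum L t"
    using cos_product_lower_bound[OF assms(2,3,4)] fejer_sum_nonneg[of L t] by (intro mult_right_mono)
  finally show ?thesis using subset_sum_kernel_eq[OF assms(1)] by (simp add: mult.assoc)
qed

lemma subset_sum_kernel_tail_lower_bound:
  assumes "finite A" "t \<noteq> 0" "\<bar>t\<bar> \<le> pi"
  shows "- (2 ^ card A * 16) / t\<^sup>2 \<le> subset_sum_kernel A L t"
proof -
  have "\<bar>cos_product A t\<bar> * fejer_sum L t \<le> fejer_sum L t"
    using abs_cos_product_le_1[of A t] fejer_sum_nonneg[of L t] by (intro mult_left_le_one_le) auto
  then have "\<bar>2 ^ card A * cos_product A t * fejer_sum L t\<bar> \<le> 2 ^ card A * fejer_sum L t"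
    using fejer_sum_nonneg[of L t] by (simp add: abs_mult)
  moreover have "2 ^ card A * fejer_sum L t \<le> 2 ^ card A * (16 / t^2)"
    using fejer_sum_le_inverse_sq[OF assms(2,3)] by (intro mult_left_mono) auto
  ultimately have "- (2 ^ card A * (16 / t^2)) \<le> subset_sum_kernel A L t"
    unfolding subset_sum_kernel_eq[OF assms(1)] by (auto simp: abs_le_iff)
  then show ?thesis by simp
qed

lemma integral_subset_sum_kernel_central:
  assumes "finite A" "0 < M" "\<forall>a\<in>A. real a \<le> M"
  defines "k \<equiv> card A" and "W \<equiv> wallis_integral (card A) M"
  shows "2 ^ k * (real L ^ 2 * W - 2 * real L ^ 4 * W / (M\<^sup>2 * (real k + 2)))
           \<le> integral {-(pi/(2*M))..pi/(2*M)} (subset_sum_kernel A L)"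
proof -
  let ?c = "pi/(2*M)"
  let ?Q = "integral {-?c..?c} (\<lambda>t. t^2 * cos (M*t)^k)"
  let ?h = "\<lambda>t. 2 ^ k * (real L ^ 2 * cos (M*t)^k - real L ^ 4 / 2 * (t^2 * cos (M*t)^k))"
  have le_h: "integral {-?c..?c} ?h \<le> integral {-?c..?c} (subset_sum_kernel A L)"
  proof (rule integral_le)
    show "?h integrable_on {-?c..?c}"
      by (intro integrable_continuous_interval continuous_intros)
    fix t assume "t \<in> {-?c..?c}"
    then have "\<bar>t\<bar> \<le> ?c" by auto
    from subset_sum_kernel_central_lower_bound[OF assms(1-3) this]
    show "?h t \<le> subset_sum_kernel A L t" unfolding k_def by (simp add: algebra_simps)
  qed (rule subset_sum_kernel_integrable)
  have h_eq: "integral {-?c..?c} ?h = 2 ^ k * (real L ^ 2 * W - real L ^ 4 / 2 * ?Q)"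
  proof -
    have "(\<lambda>t. real L ^ 2 * cos (M*t)^k) integrable_on {-?c..?c}"
      and "(\<lambda>t. real L ^ 4 / 2 * (t^2 * cos (M*t)^k)) integrable_on {-?c..?c}"
      by (intro integrable_continuous_interval continuous_intros)+
    then show ?thesis
      unfolding W_def k_def wallis_integral_def by (simp only: integral_mult_right integral_diff)
  qed
  have "real L ^ 4 / 2 * ?Q \<le> 2 * real L ^ 4 * W / (M^2 * (real k + 2))"
  proof -
    have "real L ^ 4 / 2 * ?Q \<le> real L ^ 4 / 2 * (4 / M^2 * (W / (real k + 2)))"
      using integral_sq_mult_cos_power_le[OF assms(2), of k] unfolding W_def k_def
      by (intro mult_left_mono) auto
    also have "\<dots> = 2 * real L ^ 4 * W / (M^2 * (real k + 2))" by (simp add: field_simps)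
    finally show ?thesis .
  qed
  then have "2 ^ k * (real L ^ 2 * W - 2 * real L ^ 4 * W / (M\<^sup>2 * (real k + 2)))
      \<le> 2 ^ k * (real L ^ 2 * W - real L ^ 4 / 2 * ?Q)"
    by (intro mult_left_mono) auto
  then show ?thesis using le_h h_eq by linarith
qed

lemma integral_subset_sum_kernel_tails:
  assumes "finite A" "0 < c" "c \<le> pi"
  shows "- (2 ^ card A * 16) / c \<le> integral {c..pi} (subset_sum_kernel A L)"
    and "- (2 ^ card A * 16) / c \<le> integral {-pi..-c} (subset_sum_kernel A L)"
proof -
  let ?R = "subset_sum_kernel A L"
  show "- (2 ^ card A * 16) / c \<le> integral {c..pi} ?R"
  proof (rule integral_ge_neg_inverse_sq)
    fix t assume "t \<in> {c..pi}"
    then show "- (2 ^ card A * 16) / t\<^sup>2 \<le> ?R t"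
      using subset_sum_kernel_tail_lower_bound[OF assms(1), of t] assms(2) by auto
  qed (use assms in \<open>auto intro: subset_sum_kernel_integrable\<close>)
  have "- (2 ^ card A * 16) / c \<le> integral {c..pi} (\<lambda>t. ?R (-t))"
  proof (rule integral_ge_neg_inverse_sq)
    show "(\<lambda>t. ?R (-t)) integrable_on {c..pi}"
      unfolding subset_sum_kernel_def by (intro integrable_continuous_interval continuous_intros)
    fix t assume "t \<in> {c..pi}"
    then show "- (2 ^ card A * 16) / t\<^sup>2 \<le> ?R (-t)"
      using subset_sum_kernel_tail_lower_bound[OF assms(1), of "-t"] assms(2) by auto
  qed (use assms in auto)
  also have "integral {c..pi} (\<lambda>t. ?R (-t)) = integral {-pi..-c} ?R"
    using Henstock_Kurzweil_Integration.integral_reflect_real[of pi c "\<lambda>t. ?R (-t)"] by simp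
  finally show "- (2 ^ card A * 16) / c \<le> integral {-pi..-c} ?R" .
qed

text \<open>Both sides bound the integral of the kernel over \<open>[-pi, pi]\<close>: the left one from below
  (central part \<open>|\<theta>| \<le> pi/(2M)\<close> plus the two tails), the right one from above.\<close>
lemma subset_sum_kernel_inequality:
  assumes A: "finite A" "\<forall>a\<in>A. real a \<le> M" and M: "1 \<le> M"
    and g: "\<And>s. card {I \<in> Pow A. \<Sum>I = s} \<le> g"
  defines "k \<equiv> card A" and "W \<equiv> wallis_integral (card A) M"
  shows "2 ^ k * (real L ^ 2 * W - 2 * real L ^ 4 * W / (M\<^sup>2 * (real k + 2)) - 64 * M / pi)
           \<le> pi * real g * real L * (real L + 1)"
proof -
  define c where "c = pi / (2*M)"
  define R where "R = subset_sum_kernel A L"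
  have c: "0 < c" "c \<le> pi" unfolding c_def using M pi_gt_zero by (auto simp: field_simps)
  have R: "R integrable_on {a..b}" for a b unfolding R_def by (rule subset_sum_kernel_integrable)
  have "integral {-c..c} R + integral {c..pi} R = integral {-c..pi} R"
    by (rule Henstock_Kurzweil_Integration.integral_combine) (use c R in auto)
  moreover have "integral {-pi..-c} R + integral {-c..pi} R = integral {-pi..pi} R"
    by (rule Henstock_Kurzweil_Integration.integral_combine) (use c R in auto)
  moreover have "integral {-pi..pi} R = 2 * pi * subset_sum_coincidences A L"
    using has_integral_subset_sum_kernel[OF A(1)] unfolding R_def by (simp add: integral_unique)
  moreover have "2 * pi * subset_sum_coincidences A L \<le> 2 * pi * (real g * real L * (real L + 1) / 2)"
    using subset_sum_coincidences_le[OF A(1) g, of L] by (intro mult_left_mono) auto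
  moreover have "2 * pi * (real g * real L * (real L + 1) / 2) = pi * real g * real L * (real L + 1)"
    by simp
  moreover have "2 ^ k * (real L ^ 2 * W - 2 * real L ^ 4 * W / (M\<^sup>2 * (real k + 2))) \<le> integral {-c..c} R"
    using integral_subset_sum_kernel_central[OF A(1) _ A(2), of L] M
    unfolding R_def c_def k_def W_def by simp
  moreover have "- (2 ^ k * 16) / c \<le> integral {c..pi} R" "- (2 ^ k * 16) / c \<le> integral {-pi..-c} R"
    using integral_subset_sum_kernel_tails[OF A(1) c] unfolding R_def k_def by auto
  moreover have "- (2 ^ k * 16) / c = - (2 ^ k * (32 * M / pi))" unfolding c_def by simp
  moreover have "2 ^ k * (real L ^ 2 * W - 2 * real L ^ 4 * W / (M\<^sup>2 * (real k + 2)) - 64 * M / pi)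
      = 2 ^ k * (real L ^ 2 * W - 2 * real L ^ 4 * W / (M\<^sup>2 * (real k + 2))) - 2 * (2 ^ k * (32 * M / pi))"
    by (simp add: algebra_simps)
  ultimately show ?thesis by linarith
qed

lemma subset_sum_kernel_inequality_normalized:
  assumes A: "finite A" "\<forall>a\<in>A. real a \<le> M" and M: "1 \<le> M"
    and g: "\<And>s. card {I \<in> Pow A. \<Sum>I = s} \<le> g" and L: "0 < L"
  defines "k \<equiv> card A" and "r \<equiv> 2 * real L ^ 2 / (M\<^sup>2 * (real (card A) + 2))"
  shows "2 ^ k * (wallis_integral k M * (1 - r) - 64 * M / (pi * real L ^ 2)) \<le> pi * real g * (1 + 1 / real L)"
proof -
  let ?W = "wallis_integral k M"
  have "real L ^ 2 * ?W - 2 * real L ^ 4 * ?W / (M\<^sup>2 * (real k + 2)) = real L ^ 2 * (?W * (1 - r))"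
    unfolding r_def k_def by (simp add: field_simps power4_eq_xxxx power2_eq_square)
  then have "2 ^ k * (real L ^ 2 * (?W * (1 - r)) - 64 * M / pi) \<le> pi * real g * real L * (real L + 1)"
    using subset_sum_kernel_inequality[OF A M g, of L] unfolding k_def by simp
  moreover have "2 ^ k * (real L ^ 2 * (?W * (1 - r)) - 64 * M / pi)
      = real L ^ 2 * (2 ^ k * (?W * (1 - r) - 64 * M / (pi * real L ^ 2)))"
    using L by (simp add: field_simps)
  moreover have "pi * real g * real L * (real L + 1) = real L ^ 2 * (pi * real g * (1 + 1 / real L))"
    using L by (simp add: field_simps power2_eq_square)
  ultimately have "real L ^ 2 * (2 ^ k * (?W * (1 - r) - 64 * M / (pi * real L ^ 2)))
      \<le> real L ^ 2 * (pi * real g * (1 + 1 / real L))"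
    by linarith
  then show ?thesis using L by simp
qed

section \<open>Choice of the window length\<close>

lemma sqrt_2pi_ge: "2.5 \<le> sqrt (2*pi)"
proof -
  have "2.5^2 \<le> 2*pi" using pi_approx by (simp add: power2_eq_square)
  then show ?thesis by (metis real_le_rsqrt)
qed

lemma window_ratio_le:
  fixes e M s L K :: real
  assumes e: "0 < e" "e \<le> 1/4" and "0 < M" and one_le: "1 \<le> e/3 * M * s"
    and L: "0 \<le> L" "L \<le> e/3 * M * s + 1" and K: "s\<^sup>2 \<le> K"
  shows "2 * L\<^sup>2 / (M\<^sup>2 * K) \<le> e"
proof -
  define u where "u = e/3 * M * s"
  have "L \<le> 2 * u" using L one_le unfolding u_def by linarith
  from power_mono[OF this L(1), of 2] have "L\<^sup>2 \<le> 4 * u\<^sup>2" by (simp add: power_mult_distrib)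
  moreover have "u\<^sup>2 = e\<^sup>2 / 9 * (M\<^sup>2 * s\<^sup>2)" unfolding u_def by (simp add: power_mult_distrib power_divide)
  moreover have "e\<^sup>2 / 9 * (M\<^sup>2 * s\<^sup>2) \<le> e\<^sup>2 / 9 * (M\<^sup>2 * K)" using K by (intro mult_left_mono) auto
  ultimately have "2 * L\<^sup>2 \<le> 8 * (e\<^sup>2 / 9) * (M\<^sup>2 * K)" unfolding mult.assoc by linarith
  moreover have "0 < M\<^sup>2 * K"
  proof -
    have "s \<noteq> 0" using one_le by auto
    then have "0 < K" using K by (smt (verit) zero_less_power2)
    then show ?thesis using \<open>0 < M\<close> by simp
  qed
  moreover have "8 * (e\<^sup>2 / 9) * (M\<^sup>2 * K) \<le> e * (M\<^sup>2 * K)"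
    using e \<open>0 < M\<^sup>2 * K\<close> by (intro mult_right_mono) (auto simp: power2_eq_square)
  ultimately have "2 * L\<^sup>2 \<le> e * (M\<^sup>2 * K)" by linarith
  then show ?thesis using \<open>0 < M\<^sup>2 * K\<close> by (simp add: pos_divide_le_eq)
qed

lemma window_tail_term_le:
  fixes e M s L :: real
  assumes "0 < e" "0 < M" "80 / e^3 \<le> s" and L: "e/3 * M * s \<le> L"
  shows "64 * M / (pi * L\<^sup>2) \<le> sqrt (2*pi) / (M * s) * e"
proof -
  have s: "0 < s" "80 \<le> e^3 * s"
    using assms(1,3) by (auto simp: field_simps order.strict_trans2[OF _ assms(3)])
  have "3 * 2.5 \<le> pi * sqrt (2*pi)" using pi_gt3 sqrt_2pi_ge by (intro mult_mono) auto
  from mult_mono[OF this s(2)] have "3 * 2.5 * 80 \<le> pi * sqrt (2*pi) * (e^3 * s)" by simp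
  then have key: "576 \<le> sqrt (2*pi) * e * (pi * e\<^sup>2 * s)"
    by (simp add: power3_eq_cube power2_eq_square mult_ac)
  have "0 < e/3 * M * s" using assms s by simp
  then have "(e/3 * M * s)\<^sup>2 \<le> L\<^sup>2" using L by (intro power_mono) auto
  then have "64 * M / (pi * L\<^sup>2) \<le> 64 * M / (pi * (e/3 * M * s)\<^sup>2)"
    using assms s by (intro divide_left_mono mult_left_mono mult_pos_pos) auto
  also have "\<dots> = (576 / (pi * e\<^sup>2 * s)) / (M * s)"
    using assms s by (simp add: field_simps power2_eq_square)
  also have "\<dots> \<le> (sqrt (2*pi) * e) / (M * s)"
    using key assms s by (intro divide_right_mono) (auto simp: field_simps)
  finally show ?thesis by simp
qed

lemma inverse_le_window:
  fixes e M s :: real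
  assumes "0 < e" "e \<le> 1/4" "1 \<le> M" "80 / e^3 \<le> s"
  shows "1 / e \<le> e/3 * M * s"
proof -
  have "0 < s" using assms(1,4) by (smt (verit) divide_pos_pos zero_less_power)
  have "1 / e \<le> e/3 * (80 / e^3)" using assms(1,2) by (simp add: field_simps power3_eq_cube)
  also have "\<dots> \<le> e/3 * (M * s)"
  proof -
    have "s \<le> M * s" using assms(3) \<open>0 < s\<close> by simp
    then show ?thesis using assms(1,4) by (intro mult_left_mono) auto
  qed
  finally show ?thesis by (simp add: mult.assoc)
qed

lemma two_pow_card_le:
  fixes A :: "nat set" and M e :: real
  assumes A: "finite A" "\<forall>a\<in>A. real a \<le> M" and M: "1 \<le> M"
    and g: "\<And>s. card {I \<in> Pow A. \<Sum>I = s} \<le> g"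
    and e: "0 < e" "e \<le> 1/4" and big: "80 / e^3 \<le> sqrt (real (card A) + 1)"
  shows "2 ^ card A \<le> real g * M * sqrt (real (card A) + 1) * sqrt (pi/2) * ((1 + e) / (1 - 2*e))"
proof -
  define k where "k = card A"
  define s where "s = sqrt (real k + 1)"
  define W where "W = wallis_integral k M"
  define w where "w = sqrt (2*pi) / (M * s)"
  define L where "L = nat \<lceil>e/3 * M * s\<rceil>"
  define r where "r = 2 * real L ^ 2 / (M\<^sup>2 * (real k + 2))"
  have s: "0 < s" "s\<^sup>2 \<le> real k + 2" "80 / e^3 \<le> s" using big unfolding s_def k_def by auto
  have inv_le: "1 / e \<le> e/3 * M * s" by (rule inverse_le_window[OF e M s(3)])
  moreover have "1 \<le> 1 / e" using e by (simp add: field_simps)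
  ultimately have one_le: "1 \<le> e/3 * M * s" by linarith
  have L: "e/3 * M * s \<le> real L" "real L \<le> e/3 * M * s + 1" "0 < real L"
    using one_le unfolding L_def by linarith+
  have w: "0 < w" "w \<le> W"
    using wallis_integral_lower_bound[of M k] M s(1)
    unfolding w_def W_def s_def by (auto simp: real_sqrt_divide ac_simps)
  have r: "r \<le> e" unfolding r_def by (rule window_ratio_le) (use e M one_le L s in auto)
  have "2 ^ k * (W * (1 - r) - 64 * M / (pi * real L ^ 2)) \<le> pi * real g * (1 + 1 / real L)"
    using subset_sum_kernel_inequality_normalized[OF A M g, of L] L(3) unfolding W_def r_def k_def by simp
  also have "\<dots> \<le> pi * real g * (1 + e)"
  proof -
    have "1 / e \<le> real L" using inv_le L(1) by linarith
    then have "1 / real L \<le> e" using e(1) L(3) by (simp add: field_simps)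
    then show ?thesis by (intro mult_left_mono) auto
  qed
  finally have main: "2 ^ k * (W * (1 - r) - 64 * M / (pi * real L ^ 2)) \<le> pi * real g * (1 + e)" .
  have "w * (1 - 2*e) \<le> W * (1 - r) - 64 * M / (pi * real L ^ 2)"
  proof -
    have "w * (1 - e) \<le> W * (1 - r)" using w r e by (intro mult_mono) auto
    moreover have "64 * M / (pi * real L ^ 2) \<le> w * e"
      unfolding w_def by (rule window_tail_term_le) (use e M s L in auto)
    ultimately show ?thesis by (simp add: algebra_simps)
  qed
  then have "2 ^ k * (w * (1 - 2*e)) \<le> pi * real g * (1 + e)"
    using main by (smt (verit) mult_left_mono zero_le_power)
  moreover have "0 < w * (1 - 2*e)" using w e by simp
  ultimately have "2 ^ k \<le> pi * real g * (1 + e) / (w * (1 - 2*e))"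
    by (simp add: pos_le_divide_eq)
  also have "\<dots> = real g * M * s * (pi / sqrt (2*pi)) * ((1 + e) / (1 - 2*e))"
    using e M s(1) unfolding w_def by (simp add: field_simps)
  also have "pi / sqrt (2*pi) = sqrt (pi/2)"
  proof -
    have "sqrt pi * sqrt pi = pi" "0 < sqrt pi" by simp_all
    then show ?thesis by (simp add: real_sqrt_mult real_sqrt_divide field_simps)
  qed
  finally show ?thesis unfolding s_def k_def .
qed

section \<open>Asymptotics\<close>

lemma log2_one_plus_div_le:
  assumes "0 < e" "e \<le> 1/4"
  shows "log 2 ((1 + e) / (1 - 2*e)) \<le> 9 * e"
proof -
  have "1 + e \<le> (1 + 6*e) * (1 - 2*e)" using assms by (simp add: algebra_simps)
  then have "(1 + e) / (1 - 2*e) \<le> 1 + 6*e" using assms by (simp add: divide_le_eq)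
  then have "ln ((1 + e) / (1 - 2*e)) \<le> ln (1 + 6*e)" using assms by simp
  also have "\<dots> \<le> 6 * e" using assms by (intro ln_add_one_self_le_self) simp
  finally have "ln ((1 + e) / (1 - 2*e)) / ln 2 \<le> 6 * e / (2/3)"
    using ln2_ge_two_thirds assms by (intro frac_le) auto
  then show ?thesis by (simp add: log_def)
qed

lemma card_le_log2_bound:
  fixes A :: "nat set" and n :: nat and e :: real
  assumes A: "finite A" "\<forall>a\<in>A. a \<le> n" and n: "1 \<le> n"
    and g: "\<And>s. card {I \<in> Pow A. \<Sum>I = s} \<le> g"
    and e: "0 < e" "e \<le> 1/4" and big: "(80 / e^3)\<^sup>2 \<le> real (card A) + 1"
  shows "real (card A) \<le> log 2 n + 1/2 * log 2 (real (card A) + 1) + log 2 g - log 2 (sqrt (2/pi)) + 9*e"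
proof -
  define k where "k = card A"
  \<comment> \<open>The empty set has sum \<open>0\<close>, so \<open>g \<ge> 1\<close> holds automatically.\<close>
  have "0 < card {I \<in> Pow A. \<Sum>I = 0}"
    using A(1) by (subst card_gt_0_iff) auto
  then have g1: "1 \<le> g" using g[of 0] by linarith
  define X where "X = real g * real n * sqrt (real k + 1) * inverse (sqrt (2/pi)) * ((1 + e) / (1 - 2*e))"
  have X: "0 < X" using g1 n e unfolding X_def by auto
  have "2 ^ k \<le> X"
    using two_pow_card_le[OF A(1) _ _ g e real_le_rsqrt[OF big]] A(2) n
    unfolding k_def X_def by (simp add: real_sqrt_inverse[symmetric])
  then have "real k \<le> log 2 X"
    using X log_le_cancel_iff[of 2 "2 ^ k" X] by (simp add: log_nat_power)
  also have "log 2 X = log 2 g + log 2 n + log 2 (sqrt (real k + 1)) + log 2 (inverse (sqrt (2/pi)))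
      + log 2 ((1 + e) / (1 - 2*e))"
  proof -
    have "0 < real g" "0 < real n" "0 < sqrt (real k + 1)" "0 < inverse (sqrt (2/pi))"
      "0 < (1 + e) / (1 - 2*e)"
      using g1 n e by auto
    then show ?thesis unfolding X_def by (simp only: log_mult_pos mult_pos_pos)
  qed
  also have "log 2 (sqrt (real k + 1)) = 1/2 * log 2 (real k + 1)" by (simp add: sqrt_def log_root)
  also have "log 2 (inverse (sqrt (2/pi))) = - log 2 (sqrt (2/pi))" by (rule log_inverse)
  finally show ?thesis using log2_one_plus_div_le[OF e] unfolding k_def by linarith
qed

lemma minus_half_log2_strict_mono:
  fixes x y :: real
  assumes "0 \<le> y" "y < x"
  shows "y - 1/2 * log 2 (y + 1) < x - 1/2 * log 2 (x + 1)"
proof -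
  have "log 2 (x + 1) - log 2 (y + 1) = ln ((x + 1) / (y + 1)) / ln 2"
    using assms by (simp add: log_def ln_div diff_divide_distrib)
  also have "\<dots> \<le> ((x + 1) / (y + 1) - 1) / ln 2"
    using assms by (intro divide_right_mono ln_le_minus_one) auto
  also have "(x + 1) / (y + 1) - 1 = (x - y) / (y + 1)" using assms by (simp add: field_simps)
  also have "(x - y) / (y + 1) \<le> x - y" using assms by (simp add: divide_le_eq)
  then have "(x - y) / (y + 1) / ln 2 \<le> (x - y) / (2/3)"
    using assms ln2_ge_two_thirds by (intro frac_le) auto
  finally show ?thesis using assms by simp
qed

text \<open>The implicit bound \<open>k \<le> x + log\<^sub>2 (k + 1) / 2 + C\<close> forces \<open>k = x + O(log x)\<close>, so
  \<open>log\<^sub>2 (k + 1)\<close> may be replaced by \<open>log\<^sub>2 x\<close> at the cost of an arbitrarily small \<open>\<delta>\<close>.\<close>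
lemma eventually_implicit_log2_bound:
  fixes C K \<delta> :: real
  assumes "0 < \<delta>"
  shows "\<forall>\<^sub>F x in at_top. \<forall>k::real. 0 \<le> k \<longrightarrow> (k \<le> K \<or> k \<le> x + 1/2 * log 2 (k + 1) + C)
           \<longrightarrow> k \<le> x + 1/2 * log 2 x + C + \<delta>"
proof -
  define T where "T x = x + 1/2 * log 2 x + C + \<delta>" for x :: real
  have "((\<lambda>x. (T x + 1) / x) \<longlongrightarrow> 1) at_top" unfolding T_def by real_asymp
  moreover have "1 < 2 powr (2*\<delta>)" using assms by simp
  ultimately have "\<forall>\<^sub>F x in at_top. (T x + 1) / x < 2 powr (2*\<delta>)" by (rule order_tendstoD)
  moreover have "\<forall>\<^sub>F x in at_top. 0 \<le> T x" unfolding T_def by real_asymp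
  moreover have "\<forall>\<^sub>F x in at_top. K \<le> T x" unfolding T_def by real_asymp
  moreover have "\<forall>\<^sub>F x::real in at_top. 0 < x" by (rule eventually_gt_at_top)
  ultimately show ?thesis
  proof eventually_elim
    case (elim x)
    then have "T x + 1 < 2 powr (2*\<delta>) * x" by (simp add: divide_less_eq)
    then have "log 2 (T x + 1) < log 2 (2 powr (2*\<delta>) * x)"
      using elim by (subst log_less_cancel_iff) auto
    also have "\<dots> = 2*\<delta> + log 2 x" using elim by (simp add: log_mult)
    finally have gap: "x + C \<le> T x - 1/2 * log 2 (T x + 1)" unfolding T_def by simp
    show ?case
    proof (intro allI impI)
      fix k :: real assume "0 \<le> k" and bound: "k \<le> K \<or> k \<le> x + 1/2 * log 2 (k + 1) + C"
      from bound show "k \<le> x + 1/2 * log 2 x + C + \<delta>"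
      proof
        assume "k \<le> K"
        then show ?thesis using elim unfolding T_def by linarith
      next
        assume "k \<le> x + 1/2 * log 2 (k + 1) + C"
        then have "\<not> T x < k" using gap minus_half_log2_strict_mono[of "T x" k] elim \<open>0 \<le> k\<close> by linarith
        then show ?thesis unfolding T_def by simp
      qed
    qed
  qed
qed

lemma D_set_card_subset_sums_le:
  assumes "D_set g S"
  shows "card {I \<in> Pow (S \<inter> {1..n}). \<Sum>I = s} \<le> g"
proof -
  have "{I \<in> Pow (S \<inter> {1..n}). \<Sum>I = s} \<subseteq> {I. I \<subseteq> S \<inter> {..n} \<and> \<Sum>I = s}" by auto
  moreover have "finite {I. I \<subseteq> S \<inter> {..n} \<and> \<Sum>I = s}"
    by (rule finite_subset[of _ "Pow (S \<inter> {..n})"]) auto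
  ultimately have "card {I \<in> Pow (S \<inter> {1..n}). \<Sum>I = s} \<le> card {I. I \<subseteq> S \<inter> {..n} \<and> \<Sum>I = s}"
    by (rule card_mono[rotated])
  also have "\<dots> \<le> g" using assms unfolding D_set_def by blast
  finally show ?thesis .
qed

lemma D_set_card_le_log2_bound:
  assumes "D_set g S" "1 \<le> n" "0 < e" "e \<le> 1/4" "(80 / e^3)\<^sup>2 \<le> real (card (S \<inter> {1..n})) + 1"
  shows "real (card (S \<inter> {1..n})) \<le> log 2 n + 1/2 * log 2 (real (card (S \<inter> {1..n})) + 1)
           + log 2 g - log 2 (sqrt (2/pi)) + 9*e"
  by (rule card_le_log2_bound[OF _ _ assms(2) D_set_card_subset_sums_le[OF assms(1)] assms(3-5)]) auto

theorem corollary2: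
  fixes g :: nat and S :: "nat set"
  assumes "g \<ge> 1" and "D_set g S"
  shows "\<forall>\<epsilon>>0. \<forall>\<^sub>F n in sequentially.
           real (card (S \<inter> {1..n})) \<le>
             log 2 (real n) + 1/2 * log 2 (log 2 (real n)) + log 2 (real g)
             - log 2 (sqrt (2 / pi)) + \<epsilon>"
proof (intro allI impI)
  fix \<epsilon> :: real assume "\<epsilon> > 0"
  define e where "e = min (1/4) (\<epsilon>/18)"
  define C where "C = log 2 (real g) - log 2 (sqrt (2 / pi)) + \<epsilon>/2"
  define K where "K = (80 / e^3)\<^sup>2"
  have e: "0 < e" "e \<le> 1/4" "9 * e \<le> \<epsilon>/2" using \<open>\<epsilon> > 0\<close> unfolding e_def by auto
  have "\<forall>\<^sub>F x in at_top. \<forall>k::real. 0 \<le> k \<longrightarrow> (k \<le> K \<or> k \<le> x + 1/2 * log 2 (k + 1) + C)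
           \<longrightarrow> k \<le> x + 1/2 * log 2 x + C + \<epsilon>/2"
    using \<open>\<epsilon> > 0\<close> by (intro eventually_implicit_log2_bound) simp
  moreover have "filterlim (\<lambda>n::nat. log 2 (real n)) at_top sequentially" by real_asymp
  ultimately have "\<forall>\<^sub>F n in sequentially. \<forall>k::real. 0 \<le> k
      \<longrightarrow> (k \<le> K \<or> k \<le> log 2 n + 1/2 * log 2 (k + 1) + C)
      \<longrightarrow> k \<le> log 2 n + 1/2 * log 2 (log 2 n) + C + \<epsilon>/2"
    by (rule eventually_compose_filterlim)
  moreover have "\<forall>\<^sub>F n in sequentially. 1 \<le> n" by (rule eventually_ge_at_top)
  ultimately show "\<forall>\<^sub>F n in sequentially. real (card (S \<inter> {1..n})) \<le>
      log 2 (real n) + 1/2 * log 2 (log 2 (real n)) + log 2 (real g) - log 2 (sqrt (2 / pi)) + \<epsilon>"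
  proof eventually_elim
    case (elim n)
    define k where "k = real (card (S \<inter> {1..n}))"
    have "k \<le> K \<or> k \<le> log 2 n + 1/2 * log 2 (k + 1) + C"
    proof (cases "K \<le> k + 1")
      case True
      from D_set_card_le_log2_bound[OF assms(2) elim(2) e(1,2) True[unfolded K_def k_def]] e(3)
      show ?thesis unfolding k_def C_def by linarith
    qed linarith
    then show ?case using elim(1)[rule_format, of k] unfolding k_def C_def by simp
  qed
qed

end
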